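(* If $m$ is a universal probability, then the map $\Sigma^*\ni s\mapsto m(s)I$ ($I$ the $N\times N$ identity) is a universal semi-POVM.
   Context: $N$ is a fixed positive integer; $\Sigma^*$ is the set of finite binary strings. $\mathrm{Her}(N)$ is the set of $N\times N$ Hermitian matrices and $\mathrm{Her}_Q(N)$ those with entries in $\{a+ib:a,b\in\mathbb{Q}\}$; $A\leqslant B$ means $B-A$ is positive semi-definite. A lower-computable semi-measure is a function $r:\Sigma^*\to[0,\infty)$ with $\sum_s r(s)\le 1$ such that there is a total recursive $f:\mathbb{N}\times\Sigma^*\to\mathbb{Q}$ with $\lim_{n}f(n,s)=r(s)$ and $f(n,s)\le f(n+1,s)$ for all $n,s$. A universal probability is a lower-computable semi-measure $m$ such that for every lower-computable semi-measure $r$ there is $c>0$ with $c\,r(s)\le m(s)$ for all $s$. A semi-POVM on $\Sigma^*$ is a map $R:\Sigma^*\to\mathrm{Her}(N)$ with $0\leqslant R(s)$ for all $s$ and $\sum_s R(s)\leqslant I$. A lower-computable semi-POVM is a semi-POVM $R$ for which there is a total recursive $f:\mathbb{N}\times\Sigma^*\to\mathrm{Her}_Q(N)$ with $\lim_{n}f(n,s)=R(s)$ and $f(n,s)\leqslant R(s)$ for all $n,s$. A universal semi-POVM is a lower-computable semi-POVM $M$ such that for every lower-computable semi-POVM $R$ there is $c>0$ with $c\,R(s)\leqslant M(s)$ for all $s\in\Sigma^*$. *)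

theory Defs
  imports "HOL-Analysis.Analysis" "HOL-Library.Nat_Bijection"
begin

datatype recf = RZero | RSucc | RProj nat | RComp recf "recf list"
  | RPrec recf recf | RMin recf

inductive eval_rf :: "recf \<Rightarrow> nat list \<Rightarrow> nat \<Rightarrow> bool" where
  ev_zero: "eval_rf RZero xs 0"
| ev_succ: "eval_rf RSucc (x # xs) (Suc x)"
| ev_proj: "i < length xs \<Longrightarrow> eval_rf (RProj i) xs (xs ! i)"
| ev_comp: "list_all2 (\<lambda>g y. eval_rf g xs y) gs ys \<Longrightarrow> eval_rf f ys z
             \<Longrightarrow> eval_rf (RComp f gs) xs z"
| ev_prec0: "eval_rf f xs y \<Longrightarrow> eval_rf (RPrec f g) (0 # xs) y"
| ev_precS: "eval_rf (RPrec f g) (n # xs) y \<Longrightarrow> eval_rf g (n # y # xs) z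
             \<Longrightarrow> eval_rf (RPrec f g) (Suc n # xs) z"
| ev_min: "eval_rf f (n # xs) 0 \<Longrightarrow> (\<forall>k<n. \<exists>y. y \<noteq> 0 \<and> eval_rf f (k # xs) y)
             \<Longrightarrow> eval_rf (RMin f) xs n"
monos list.rel_mono_strong

definition total_recursive :: "(nat \<Rightarrow> nat) \<Rightarrow> bool" where
  "total_recursive h \<longleftrightarrow> (\<exists>c. \<forall>x. eval_rf c [x] (h x))"

definition code_str :: "bool list \<Rightarrow> nat" where
  "code_str s = list_encode (map (\<lambda>b. if b then 1 else 0) s)"

definition rat_of_code :: "nat \<Rightarrow> rat" where
  "rat_of_code k = (case prod_decode k of (a, b) \<Rightarrow> Fract (int_decode a) (int b + 1))"

definition gauss_of_code :: "nat \<Rightarrow> complex" where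
  "gauss_of_code k = (case prod_decode k of (a, b) \<Rightarrow>
      Complex (real_of_rat (rat_of_code a)) (real_of_rat (rat_of_code b)))"

definition computable_rat_fun :: "(nat \<Rightarrow> bool list \<Rightarrow> rat) \<Rightarrow> bool" where
  "computable_rat_fun f \<longleftrightarrow> (\<exists>h. total_recursive h \<and>
      (\<forall>n s. rat_of_code (h (prod_encode (n, code_str s))) = f n s))"

text \<open>Matrix-valued: entries computed uniformly, row/column indices numbered 0..N-1
  via some bijection (computability does not depend on the chosen numbering).\<close>
definition computable_mat_fun :: "(nat \<Rightarrow> bool list \<Rightarrow> complex^'n::finite^'n) \<Rightarrow> bool" where
  "computable_mat_fun f \<longleftrightarrow> (\<exists>ix::'n \<Rightarrow> nat. bij_betw ix UNIV {..<CARD('n)} \<and>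
      (\<exists>h. total_recursive h \<and>
        (\<forall>n s i j. gauss_of_code (h (prod_encode (prod_encode (n, code_str s),
                                                prod_encode (ix i, ix j)))) = f n s $ i $ j)))"

definition lower_computable_semimeasure :: "(bool list \<Rightarrow> real) \<Rightarrow> bool" where
  "lower_computable_semimeasure r \<longleftrightarrow>
     (\<forall>s. 0 \<le> r s) \<and> r summable_on UNIV \<and> infsum r UNIV \<le> 1 \<and>
     (\<exists>f. computable_rat_fun f \<and>
          (\<forall>s. (\<lambda>n. real_of_rat (f n s)) \<longlonglongrightarrow> r s) \<and>
          (\<forall>n s. f n s \<le> f (Suc n) s))"

definition universal_probability :: "(bool list \<Rightarrow> real) \<Rightarrow> bool" where
  "universal_probability m \<longleftrightarrow> lower_computable_semimeasure m \<and>
     (\<forall>r. lower_computable_semimeasure r \<longrightarrow> (\<exists>c>0. \<forall>s. c * r s \<le> m s))"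

text \<open>N x N complex matrices are complex^'n^'n with N = CARD('n).\<close>
definition hermitian :: "complex^'n::finite^'n \<Rightarrow> bool" where
  "hermitian A \<longleftrightarrow> (\<forall>i j. A $ i $ j = cnj (A $ j $ i))"

definition psd :: "complex^'n::finite^'n \<Rightarrow> bool" where
  "psd A \<longleftrightarrow> hermitian A \<and>
     (\<forall>v::complex^'n. 0 \<le> Re (\<Sum>i\<in>UNIV. \<Sum>j\<in>UNIV. cnj (v $ i) * A $ i $ j * v $ j))"

definition loewner_le :: "complex^'n::finite^'n \<Rightarrow> complex^'n^'n \<Rightarrow> bool" where
  "loewner_le A B \<longleftrightarrow> psd (B - A)"

definition Her_Q :: "(complex^'n::finite^'n) set" where
  "Her_Q = {A. hermitian A \<and> (\<forall>i j. Re (A $ i $ j) \<in> \<rat> \<and> Im (A $ i $ j) \<in> \<rat>)}"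

definition semi_POVM :: "(bool list \<Rightarrow> complex^'n::finite^'n) \<Rightarrow> bool" where
  "semi_POVM R \<longleftrightarrow> (\<forall>s. hermitian (R s) \<and> loewner_le 0 (R s)) \<and>
     R summable_on UNIV \<and> loewner_le (infsum R UNIV) (mat 1)"

definition lower_computable_semi_POVM :: "(bool list \<Rightarrow> complex^'n::finite^'n) \<Rightarrow> bool" where
  "lower_computable_semi_POVM R \<longleftrightarrow> semi_POVM R \<and>
     (\<exists>f. computable_mat_fun f \<and> (\<forall>n s. f n s \<in> Her_Q) \<and>
          (\<forall>s. (\<lambda>n. f n s) \<longlonglongrightarrow> R s) \<and>
          (\<forall>n s. loewner_le (f n s) (R s)))"

definition universal_semi_POVM :: "(bool list \<Rightarrow> complex^'n::finite^'n) \<Rightarrow> bool" where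
  "universal_semi_POVM M \<longleftrightarrow> lower_computable_semi_POVM M \<and>
     (\<forall>R::bool list \<Rightarrow> complex^'n^'n. lower_computable_semi_POVM R \<longrightarrow>
        (\<exists>c::real>0. \<forall>s. loewner_le (c *\<^sub>R R s) (M s)))"

end

theory Submission
  imports Defs
begin

(* A lower-computable semi-POVM R has lower-computable semi-measures on its diagonal,
  s |-> R(s)_kk: the rational approximations of R(s)_kk lie below it, and their running
  maxima make them increasing. Universality of m gives d > 0 with d R(s)_kk <= m(s) for
  all k. For a positive semidefinite A every entry satisfies |A_ab| <= tr A, hence
  v* A v <= N tr(A) |v|^2, and therefore (d / N^2) R(s) <= m(s) I in the Loewner order.
  That m I is itself lower computable is clear: approximate it by g_n(s) I, where g_n
  approximates m. *)

section \<open>Recursive functions of several arguments\<close>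

definition recursive_fn :: "nat \<Rightarrow> (nat list \<Rightarrow> nat) \<Rightarrow> bool" where
  "recursive_fn k F \<longleftrightarrow> (\<exists>c. \<forall>xs. length xs = k \<longrightarrow> eval_rf c xs (F xs))"

lemma recursive_fn_cong:
  assumes "recursive_fn k F" "\<And>xs. length xs = k \<Longrightarrow> F xs = G xs"
  shows "recursive_fn k G"
  using assms unfolding recursive_fn_def by metis

lemma recursive_fn_zero: "recursive_fn k (\<lambda>_. 0)"
  unfolding recursive_fn_def by (auto intro: eval_rf.intros)

lemma recursive_fn_proj: "i < k \<Longrightarrow> recursive_fn k (\<lambda>xs. xs ! i)"
  unfolding recursive_fn_def by (auto intro: eval_rf.intros)

lemma recursive_fn_succ: "recursive_fn 1 (\<lambda>xs. Suc (xs ! 0))"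
  unfolding recursive_fn_def
  by (rule exI[of _ RSucc]) (auto simp: length_Suc_conv intro: eval_rf.intros)

lemma recursive_fn_compose:
  assumes "recursive_fn (length Gs) g" and "\<forall>G\<in>set Gs. recursive_fn k G"
  shows "recursive_fn k (\<lambda>xs. g (map (\<lambda>G. G xs) Gs))"
proof -
  obtain prog where prog: "\<forall>G\<in>set Gs. \<forall>xs. length xs = k \<longrightarrow> eval_rf (prog G) xs (G xs)"
    using assms(2) unfolding recursive_fn_def by metis
  obtain cg where cg: "\<forall>ys. length ys = length Gs \<longrightarrow> eval_rf cg ys (g ys)"
    using assms(1) unfolding recursive_fn_def by blast
  have "eval_rf (RComp cg (map prog Gs)) xs (g (map (\<lambda>G. G xs) Gs))" if "length xs = k" for xs
  proof (rule ev_comp)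
    show "list_all2 (\<lambda>c y. eval_rf c xs y) (map prog Gs) (map (\<lambda>G. G xs) Gs)"
      unfolding list_all2_map1 list_all2_map2 list_all2_same using prog that by blast
  qed (use cg in simp)
  then show ?thesis unfolding recursive_fn_def by blast
qed

lemma recursive_fn_compose1:
  assumes "recursive_fn 1 (\<lambda>xs. g (xs ! 0))" "recursive_fn k A"
  shows "recursive_fn k (\<lambda>xs. g (A xs))"
  using recursive_fn_compose[of "[A]" "\<lambda>xs. g (xs ! 0)" k] assms by simp

lemma recursive_fn_compose2:
  assumes "recursive_fn 2 (\<lambda>xs. g (xs ! 0) (xs ! 1))" "recursive_fn k A" "recursive_fn k B"
  shows "recursive_fn k (\<lambda>xs. g (A xs) (B xs))"
  using recursive_fn_compose[of "[A, B]" "\<lambda>xs. g (xs ! 0) (xs ! 1)" k] assms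
  by (simp add: numeral_2_eq_2)

lemma recursive_fn_Suc: "recursive_fn k A \<Longrightarrow> recursive_fn k (\<lambda>xs. Suc (A xs))"
  by (rule recursive_fn_compose1[OF recursive_fn_succ])

lemma recursive_fn_const: "recursive_fn k (\<lambda>_. n)"
  by (induction n) (auto intro: recursive_fn_zero recursive_fn_Suc)

lemma recursive_fn_rec_nat:
  assumes "recursive_fn k f" "recursive_fn (Suc (Suc k)) g"
  shows "recursive_fn (Suc k) (\<lambda>xs. rec_nat (f (tl xs)) (\<lambda>n y. g (n # y # tl xs)) (hd xs))"
proof -
  obtain cf where cf: "\<forall>xs. length xs = k \<longrightarrow> eval_rf cf xs (f xs)"
    using assms(1) unfolding recursive_fn_def by blast
  obtain cg where cg: "\<forall>xs. length xs = Suc (Suc k) \<longrightarrow> eval_rf cg xs (g xs)"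
    using assms(2) unfolding recursive_fn_def by blast
  have "eval_rf (RPrec cf cg) (n # ys) (rec_nat (f ys) (\<lambda>n y. g (n # y # ys)) n)"
    if "length ys = k" for n ys
  proof (induction n)
    case 0
    then show ?case using cf that by (auto intro: ev_prec0)
  next
    case (Suc n)
    then show ?case using cg that by (auto intro: ev_precS)
  qed
  then have "eval_rf (RPrec cf cg) xs (rec_nat (f (tl xs)) (\<lambda>n y. g (n # y # tl xs)) (hd xs))"
    if "length xs = Suc k" for xs
    using that by (cases xs) auto
  then show ?thesis unfolding recursive_fn_def by blast
qed

lemma recursive_fn_Least:
  assumes "recursive_fn (Suc k) f" "\<And>xs. length xs = k \<Longrightarrow> \<exists>n. f (n # xs) = 0"
  shows "recursive_fn k (\<lambda>xs. LEAST n. f (n # xs) = 0)"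
proof -
  obtain cf where cf: "\<forall>xs. length xs = Suc k \<longrightarrow> eval_rf cf xs (f xs)"
    using assms(1) unfolding recursive_fn_def by blast
  have "eval_rf (RMin cf) xs (LEAST n. f (n # xs) = 0)" if "length xs = k" for xs
  proof (rule ev_min)
    show "eval_rf cf ((LEAST n. f (n # xs) = 0) # xs) 0"
      using cf that LeastI_ex[OF assms(2)[OF that]] by (metis length_Cons)
    show "\<forall>j<(LEAST n. f (n # xs) = 0). \<exists>y. y \<noteq> 0 \<and> eval_rf cf (j # xs) y"
    proof (intro allI impI)
      fix j assume "j < (LEAST n. f (n # xs) = 0)"
      then have "f (j # xs) \<noteq> 0" by (rule not_less_Least)
      moreover have "eval_rf cf (j # xs) (f (j # xs))" using cf that by simp
      ultimately show "\<exists>y. y \<noteq> 0 \<and> eval_rf cf (j # xs) y" by blast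
    qed
  qed
  then show ?thesis unfolding recursive_fn_def by blast
qed

lemma recursive_fn_rec_nat_unary:
  assumes "recursive_fn 2 (\<lambda>xs. g (xs ! 0) (xs ! 1))"
  shows "recursive_fn 1 (\<lambda>xs. rec_nat a g (xs ! 0))"
  using recursive_fn_rec_nat[OF recursive_fn_const[of 0 a], of "\<lambda>xs. g (xs ! 0) (xs ! 1)"] assms
  by (auto simp: numeral_2_eq_2 length_Suc_conv elim!: recursive_fn_cong)

lemma recursive_fn_rec_nat_param:
  assumes "recursive_fn 1 (\<lambda>xs. a (xs ! 0))" "recursive_fn 3 (\<lambda>xs. g (xs ! 0) (xs ! 1) (xs ! 2))"
  shows "recursive_fn 2 (\<lambda>xs. rec_nat (a (xs ! 1)) (\<lambda>n y. g n y (xs ! 1)) (xs ! 0))"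
  using recursive_fn_rec_nat[of 1 "\<lambda>xs. a (xs ! 0)" "\<lambda>xs. g (xs ! 0) (xs ! 1) (xs ! 2)"] assms
  by (auto simp: numeral_2_eq_2 numeral_3_eq_3 length_Suc_conv elim!: recursive_fn_cong)

lemma recursive_fn_add:
  assumes "recursive_fn k A" "recursive_fn k B"
  shows "recursive_fn k (\<lambda>xs. A xs + B xs)"
proof -
  have "rec_nat x (\<lambda>_ y. Suc y) n = n + x" for x n :: nat
    by (induction n) auto
  then have "recursive_fn 2 (\<lambda>xs. xs ! 0 + xs ! 1)"
    using recursive_fn_rec_nat_param[of "\<lambda>x. x" "\<lambda>_ y _. Suc y"]
    by (simp add: recursive_fn_proj recursive_fn_Suc)
  then show ?thesis using assms by (rule recursive_fn_compose2)
qed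

lemma recursive_fn_mult:
  assumes "recursive_fn k A" "recursive_fn k B"
  shows "recursive_fn k (\<lambda>xs. A xs * B xs)"
proof -
  have "rec_nat 0 (\<lambda>_ y. y + x) n = n * x" for x n :: nat
    by (induction n) auto
  then have "recursive_fn 2 (\<lambda>xs. xs ! 0 * xs ! 1)"
    using recursive_fn_rec_nat_param[of "\<lambda>_. 0" "\<lambda>_ y x. y + x"]
    by (simp add: recursive_fn_proj recursive_fn_const recursive_fn_add)
  then show ?thesis using assms by (rule recursive_fn_compose2)
qed

lemma recursive_fn_pred:
  assumes "recursive_fn k A"
  shows "recursive_fn k (\<lambda>xs. A xs - 1)"
proof -
  have "rec_nat 0 (\<lambda>n _. n) n = n - 1" for n :: nat
    by (cases n) auto
  then have "recursive_fn 1 (\<lambda>xs. xs ! 0 - 1)"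
    using recursive_fn_rec_nat_unary[of "\<lambda>n _. n" 0] by (simp add: recursive_fn_proj)
  then show ?thesis
    using assms by (rule recursive_fn_compose1)
qed

lemma recursive_fn_diff:
  assumes "recursive_fn k A" "recursive_fn k B"
  shows "recursive_fn k (\<lambda>xs. A xs - B xs)"
proof -
  have "rec_nat x (\<lambda>_ y. y - 1) n = x - n" for x n :: nat
    by (induction n) auto
  then have "recursive_fn 2 (\<lambda>xs. xs ! 1 - xs ! 0)"
    using recursive_fn_rec_nat_param[of "\<lambda>x. x" "\<lambda>_ y _. y - 1"]
      recursive_fn_pred[OF recursive_fn_proj[of 1 3]]
    by (simp add: recursive_fn_proj)
  then show ?thesis using recursive_fn_compose2[of "\<lambda>b a. a - b"] assms by blast
qed

lemma recursive_fn_if_zero: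
  assumes "recursive_fn k A" "recursive_fn k B" "recursive_fn k C"
  shows "recursive_fn k (\<lambda>xs. if A xs = 0 then B xs else C xs)"
proof -
  have "recursive_fn k (\<lambda>xs. B xs * (1 - A xs) + C xs * (1 - (1 - A xs)))"
    by (intro recursive_fn_add recursive_fn_mult recursive_fn_diff recursive_fn_const assms)
  then show ?thesis by (rule recursive_fn_cong) simp
qed

lemma recursive_fn_if_eq:
  assumes "recursive_fn k A" "recursive_fn k A'" "recursive_fn k B" "recursive_fn k C"
  shows "recursive_fn k (\<lambda>xs. if A xs = A' xs then B xs else C xs)"
proof -
  have "recursive_fn k (\<lambda>xs. if (A xs - A' xs) + (A' xs - A xs) = 0 then B xs else C xs)"
    by (intro recursive_fn_if_zero recursive_fn_add recursive_fn_diff assms)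
  then show ?thesis by (rule recursive_fn_cong) auto
qed

lemma recursive_fn_mod2:
  assumes "recursive_fn k A"
  shows "recursive_fn k (\<lambda>xs. A xs mod 2)"
proof -
  have "rec_nat 0 (\<lambda>_ y. 1 - y) n = n mod 2" for n :: nat
    by (induction n) (auto simp: mod_Suc)
  then have "recursive_fn 1 (\<lambda>xs. xs ! 0 mod 2)"
    using recursive_fn_rec_nat_unary[of "\<lambda>_ y. 1 - y" 0]
    by (simp add: recursive_fn_proj recursive_fn_diff recursive_fn_const)
  then show ?thesis
    using assms by (rule recursive_fn_compose1)
qed

lemma recursive_fn_div2:
  assumes "recursive_fn k A"
  shows "recursive_fn k (\<lambda>xs. A xs div 2)"
proof -
  have "rec_nat 0 (\<lambda>n y. y + n mod 2) n = n div 2" for n :: nat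
    by (induction n) (auto simp: div_Suc mod_Suc)
  then have "recursive_fn 1 (\<lambda>xs. xs ! 0 div 2)"
    using recursive_fn_rec_nat_unary[of "\<lambda>n y. y + n mod 2" 0]
    by (simp add: recursive_fn_proj recursive_fn_add recursive_fn_mod2)
  then show ?thesis
    using assms by (rule recursive_fn_compose1)
qed

lemma recursive_fn_triangle:
  assumes "recursive_fn k A"
  shows "recursive_fn k (\<lambda>xs. triangle (A xs))"
proof -
  have "rec_nat 0 (\<lambda>n y. y + Suc n) n = triangle n" for n :: nat
    by (induction n) auto
  then have "recursive_fn 1 (\<lambda>xs. triangle (xs ! 0))"
    using recursive_fn_rec_nat_unary[of "\<lambda>n y. y + Suc n" 0]
    by (simp add: recursive_fn_proj recursive_fn_add recursive_fn_Suc)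
  then show ?thesis
    using assms by (rule recursive_fn_compose1)
qed

definition triangle_root :: "nat \<Rightarrow> nat" where
  "triangle_root x = (LEAST t. x < triangle (Suc t))"

lemma triangle_root_bounds:
  "triangle (triangle_root x) \<le> x \<and> x < triangle (Suc (triangle_root x))"
proof -
  have ex: "\<exists>t. x < triangle (Suc t)"
    by (rule exI[of _ x]) (induction x, auto)
  have upper: "x < triangle (Suc (triangle_root x))"
    unfolding triangle_root_def using ex by (rule LeastI_ex)
  have "triangle (triangle_root x) \<le> x"
  proof (cases "triangle_root x")
    case (Suc t)
    then have "t < triangle_root x" by simp
    then have "\<not> x < triangle (Suc t)" unfolding triangle_root_def by (rule not_less_Least)
    then show ?thesis using Suc by simp
  qed simp
  with upper show ?thesis by simp
qed

lemma prod_decode_eq_triangle_root: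
  "prod_decode x = (x - triangle (triangle_root x), triangle_root x - (x - triangle (triangle_root x)))"
proof -
  let ?t = "triangle_root x"
  have "x = triangle ?t + (x - triangle ?t)" "x - triangle ?t \<le> ?t"
    using triangle_root_bounds[of x] by auto
  then show ?thesis
    by (metis prod_decode_triangle_add prod_decode_aux.simps)
qed

lemma recursive_fn_triangle_root:
  assumes "recursive_fn k A"
  shows "recursive_fn k (\<lambda>xs. triangle_root (A xs))"
proof -
  have "recursive_fn 1 (\<lambda>xs. LEAST t. (\<lambda>zs. Suc (zs ! 1) - triangle (Suc (zs ! 0))) (t # xs) = 0)"
  proof (rule recursive_fn_Least)
    show "recursive_fn (Suc 1) (\<lambda>zs. Suc (zs ! 1) - triangle (Suc (zs ! 0)))"
      by (intro recursive_fn_diff recursive_fn_Suc recursive_fn_triangle recursive_fn_proj) simp_all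
    show "\<exists>t. (\<lambda>zs. Suc (zs ! 1) - triangle (Suc (zs ! 0))) (t # xs) = 0" for xs :: "nat list"
      using triangle_root_bounds[of "xs ! 0"] by (intro exI[of _ "triangle_root (xs ! 0)"]) simp
  qed
  then have "recursive_fn 1 (\<lambda>xs. triangle_root (xs ! 0))"
    unfolding triangle_root_def by (simp add: less_eq_Suc_le)
  then show ?thesis
    using assms by (rule recursive_fn_compose1)
qed

lemma recursive_fn_fst_prod_decode:
  "recursive_fn k A \<Longrightarrow> recursive_fn k (\<lambda>xs. fst (prod_decode (A xs)))"
  unfolding prod_decode_eq_triangle_root fst_conv
  by (intro recursive_fn_diff recursive_fn_triangle recursive_fn_triangle_root)

lemma recursive_fn_snd_prod_decode:
  "recursive_fn k A \<Longrightarrow> recursive_fn k (\<lambda>xs. snd (prod_decode (A xs)))"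
  unfolding prod_decode_eq_triangle_root snd_conv
  by (intro recursive_fn_diff recursive_fn_triangle recursive_fn_triangle_root)

lemma recursive_fn_prod_encode:
  "recursive_fn k A \<Longrightarrow> recursive_fn k B \<Longrightarrow> recursive_fn k (\<lambda>xs. prod_encode (A xs, B xs))"
  unfolding prod_encode_def case_prod_conv by (intro recursive_fn_add recursive_fn_triangle) simp_all

lemma total_recursive_iff_recursive_fn: "total_recursive h \<longleftrightarrow> recursive_fn 1 (\<lambda>xs. h (xs ! 0))"
  unfolding total_recursive_def recursive_fn_def
  by (metis One_nat_def list.size(3) nth_Cons_0 length_Suc_conv length_0_conv)

lemma recursive_fn_total_recursive:
  "total_recursive h \<Longrightarrow> recursive_fn k A \<Longrightarrow> recursive_fn k (\<lambda>xs. h (A xs))"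
  unfolding total_recursive_iff_recursive_fn by (rule recursive_fn_compose1)

lemmas recursive_fn_intros =
  recursive_fn_const recursive_fn_proj recursive_fn_Suc recursive_fn_add recursive_fn_mult
  recursive_fn_diff recursive_fn_if_zero recursive_fn_if_eq recursive_fn_mod2 recursive_fn_div2
  recursive_fn_fst_prod_decode recursive_fn_snd_prod_decode recursive_fn_prod_encode

section \<open>Running maxima of rational approximations\<close>

definition int_code_pos :: "nat \<Rightarrow> nat" where
  "int_code_pos p = (1 - p mod 2) * (p div 2)"

definition int_code_neg :: "nat \<Rightarrow> nat" where
  "int_code_neg p = p mod 2 * Suc (p div 2)"

lemma int_decode_eq_pos_minus_neg: "int_decode p = int (int_code_pos p) - int (int_code_neg p)"
  unfolding int_decode_def sum_decode_def int_code_pos_def int_code_neg_def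
  by (cases "even p") (auto elim!: oddE)

(* Cross-multiplied comparison of p/(q+1) with r/(t+1), the negative parts of the numerators
  moved to the other side so that one truncated subtraction decides it. *)
definition rat_code_cmp :: "nat \<Rightarrow> nat \<Rightarrow> nat" where
  "rat_code_cmp a b =
     (int_code_pos (fst (prod_decode a)) * Suc (snd (prod_decode b))
        + int_code_neg (fst (prod_decode b)) * Suc (snd (prod_decode a)))
   - (int_code_pos (fst (prod_decode b)) * Suc (snd (prod_decode a))
        + int_code_neg (fst (prod_decode a)) * Suc (snd (prod_decode b)))"

lemma rat_code_cmp_eq_0_iff: "rat_code_cmp a b = 0 \<longleftrightarrow> rat_of_code a \<le> rat_of_code b"
proof -
  obtain p q where a: "prod_decode a = (p, q)" by fastforce
  obtain r t where b: "prod_decode b = (r, t)" by fastforce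
  have "rat_of_code a \<le> rat_of_code b \<longleftrightarrow>
      of_int (int_decode p) / of_int (int q + 1) \<le> (of_int (int_decode r) / of_int (int t + 1) :: rat)"
    unfolding rat_of_code_def a b by (simp add: Fract_of_int_quotient)
  also have "\<dots> \<longleftrightarrow> (of_int (int_decode p * (int t + 1)) :: rat) \<le> of_int (int_decode r * (int q + 1))"
    by (simp add: divide_le_eq le_divide_eq add_pos_nonneg)
  also have "\<dots> \<longleftrightarrow> int_decode p * (int t + 1) \<le> int_decode r * (int q + 1)"
    by (rule of_int_le_iff)
  also have "\<dots> \<longleftrightarrow> int (int_code_pos p * Suc t + int_code_neg r * Suc q)
      \<le> int (int_code_pos r * Suc q + int_code_neg p * Suc t)"
    unfolding int_decode_eq_pos_minus_neg by (simp add: algebra_simps)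
  also have "\<dots> \<longleftrightarrow> rat_code_cmp a b = 0"
    unfolding of_nat_le_iff rat_code_cmp_def a b by simp
  finally show ?thesis ..
qed

definition rat_code_max :: "nat \<Rightarrow> nat \<Rightarrow> nat" where
  "rat_code_max a b = (if rat_code_cmp a b = 0 then b else a)"

lemma rat_of_code_max: "rat_of_code (rat_code_max a b) = max (rat_of_code a) (rat_of_code b)"
  unfolding rat_code_max_def rat_code_cmp_eq_0_iff by simp

lemma recursive_fn_rat_code_max:
  "recursive_fn k A \<Longrightarrow> recursive_fn k B \<Longrightarrow> recursive_fn k (\<lambda>xs. rat_code_max (A xs) (B xs))"
  unfolding rat_code_max_def rat_code_cmp_def int_code_pos_def int_code_neg_def
  by (intro recursive_fn_intros)

lemma computable_rat_fun_running_max: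
  assumes "computable_rat_fun f"
  shows "computable_rat_fun (\<lambda>n s. Max ((\<lambda>k. f k s) ` {..n}))"
proof -
  obtain h where h: "total_recursive h" "\<And>n s. rat_of_code (h (prod_encode (n, code_str s))) = f n s"
    using assms unfolding computable_rat_fun_def by blast
  define step where "step x k y = rat_code_max y (h (prod_encode (Suc k, x)))" for x k y
  define H where "H z = rec_nat (h (prod_encode (0, snd (prod_decode z))))
    (step (snd (prod_decode z))) (fst (prod_decode z))" for z
  have "recursive_fn 2 (\<lambda>xs. rec_nat (h (prod_encode (0, xs ! 1))) (step (xs ! 1)) (xs ! 0))"
    using recursive_fn_rec_nat_param[of "\<lambda>x. h (prod_encode (0, x))" "\<lambda>k y x. step x k y"]
    unfolding step_def
    by (simp add: recursive_fn_rat_code_max recursive_fn_total_recursive[OF h(1)] recursive_fn_intros)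
  then have "recursive_fn 1 (\<lambda>xs. H (xs ! 0))"
    unfolding H_def by (rule recursive_fn_compose2) (intro recursive_fn_intros; simp)+
  then have "total_recursive H" by (simp add: total_recursive_iff_recursive_fn)
  moreover have "rat_of_code (H (prod_encode (n, code_str s))) = Max ((\<lambda>k. f k s) ` {..n})" for n s
  proof (induction n)
    case 0
    then show ?case by (simp add: H_def h(2))
  next
    case (Suc n)
    have "H (prod_encode (Suc n, code_str s)) = step (code_str s) n (H (prod_encode (n, code_str s)))"
      by (simp add: H_def)
    then show ?case
      using Suc.IH by (simp add: step_def rat_of_code_max h(2) atMost_Suc max.commute)
  qed
  ultimately show ?thesis unfolding computable_rat_fun_def by blast
qed

(* The approximants need not increase; their running maxima do. *)
lemma lower_computable_semimeasure_of_approx: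
  assumes "\<And>s. 0 \<le> r s" "r summable_on UNIV" "infsum r UNIV \<le> 1"
    and "computable_rat_fun f"
    and "\<And>s. (\<lambda>n. real_of_rat (f n s)) \<longlonglongrightarrow> r s"
    and "\<And>n s. real_of_rat (f n s) \<le> r s"
  shows "lower_computable_semimeasure r"
proof -
  define g where "g n s = Max ((\<lambda>k. f k s) ` {..n})" for n s
  have "computable_rat_fun g"
    unfolding g_def using assms(4) by (rule computable_rat_fun_running_max)
  moreover have "g n s \<le> g (Suc n) s" for n s
    unfolding g_def by (rule Max_mono) (auto simp: atMost_Suc)
  moreover have "(\<lambda>n. real_of_rat (g n s)) \<longlonglongrightarrow> r s" for s
  proof (rule tendsto_sandwich[OF _ _ assms(5) tendsto_const])
    show "\<forall>\<^sub>F n in sequentially. real_of_rat (f n s) \<le> real_of_rat (g n s)"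
      by (simp add: g_def of_rat_less_eq)
    have "g n s \<in> (\<lambda>k. f k s) ` {..n}" for n
      unfolding g_def by (rule Max_in) auto
    then have "real_of_rat (g n s) \<le> r s" for n
      using assms(6) by (metis imageE)
    then show "\<forall>\<^sub>F n in sequentially. real_of_rat (g n s) \<le> r s"
      by simp
  qed
  ultimately show ?thesis
    using assms(1-3) unfolding lower_computable_semimeasure_def by blast
qed

section \<open>Positive semidefinite matrices\<close>

definition quad_form :: "complex^'n::finite^'n \<Rightarrow> complex^'n \<Rightarrow> complex" where
  "quad_form A v = (\<Sum>i\<in>UNIV. \<Sum>j\<in>UNIV. cnj (v $ i) * A $ i $ j * v $ j)"

lemma psd_iff_quad_form: "psd A \<longleftrightarrow> hermitian A \<and> (\<forall>v. 0 \<le> Re (quad_form A v))"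
  unfolding psd_def quad_form_def ..

lemma mat1_nth: "mat 1 $ i $ j = (if i = j then 1 else 0)"
  by (simp add: mat_def)

lemma scaleR_matrix_nth: "(c *\<^sub>R A) $ i $ j = of_real c * (A $ i $ j :: complex)"
  unfolding vector_scaleR_component by (rule scaleR_conv_of_real)

lemma quad_form_diff: "quad_form (A - B) v = quad_form A v - quad_form B v"
  unfolding quad_form_def by (simp add: algebra_simps sum_subtractf)

lemma quad_form_scaleR: "quad_form (c *\<^sub>R A) v = of_real c * quad_form A v"
  unfolding quad_form_def scaleR_matrix_nth by (simp add: sum_distrib_left algebra_simps)

lemma quad_form_mat1: "quad_form (mat 1) v = of_real (\<Sum>i\<in>UNIV. (cmod (v $ i))\<^sup>2)"
  unfolding quad_form_def mat1_nth of_real_sum complex_norm_square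
  by (simp add: if_distrib[of "times z" for z] if_distrib[of "\<lambda>y. y * z" for z] mult.commute
      cong: if_cong)

lemma hermitian_diff: "hermitian A \<Longrightarrow> hermitian B \<Longrightarrow> hermitian (A - B)"
  unfolding hermitian_def by (metis complex_cnj_diff vector_minus_component)

lemma hermitian_scaleR: "hermitian A \<Longrightarrow> hermitian (c *\<^sub>R A)"
  unfolding hermitian_def scaleR_matrix_nth by (metis complex_cnj_mult complex_cnj_complex_of_real)

lemma hermitian_mat1: "hermitian (mat 1)"
  unfolding hermitian_def mat1_nth by simp

lemma psd_scaleR_mat1: "0 \<le> c \<Longrightarrow> psd (c *\<^sub>R mat 1)"
  unfolding psd_iff_quad_form quad_form_scaleR quad_form_mat1
  by (simp add: hermitian_scaleR hermitian_mat1 sum_nonneg)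

lemma quad_form_unit_vector:
  "quad_form A (\<chi> k. if k = i then 1 else 0) = A $ i $ i"
  unfolding quad_form_def
  by (simp add: if_distrib[of cnj] if_distrib[of "times z" for z] if_distrib[of "\<lambda>y. y * z" for z] cong: if_cong)

lemma psd_diag_nonneg: "psd A \<Longrightarrow> 0 \<le> Re (A $ i $ i)"
  unfolding psd_iff_quad_form using quad_form_unit_vector[of A i] by metis

lemma quad_form_two_unit_vectors:
  fixes A :: "complex^'n::finite^'n"
  assumes "i \<noteq> j"
  shows "quad_form A (\<chi> k. (if k = i then 1 else 0) + (if k = j then w else 0))
    = A $ i $ i + A $ i $ j * w + cnj w * A $ j $ i + cnj w * w * A $ j $ j"
proof -
  let ?v = "(\<chi> k. (if k = i then 1 else 0) + (if k = j then w else 0)) :: complex^'n"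
  have inner: "(\<Sum>b\<in>UNIV. A $ x $ b * ?v $ b) = A $ x $ i + A $ x $ j * w" for x
    by (simp add: distrib_left sum.distrib if_distrib[of "times z" for z] cong: if_cong)
  have outer: "(\<Sum>x\<in>UNIV. cnj (?v $ x) * g x) = g i + cnj w * g j" for g :: "'n \<Rightarrow> complex"
    by (simp add: distrib_right sum.distrib if_distrib[of cnj] if_distrib[of "\<lambda>y. y * z" for z] cong: if_cong)
  have "quad_form A ?v = (\<Sum>x\<in>UNIV. cnj (?v $ x) * (\<Sum>b\<in>UNIV. A $ x $ b * ?v $ b))"
    unfolding quad_form_def sum_distrib_left by (simp only: mult.assoc)
  also have "\<dots> = (A $ i $ i + A $ i $ j * w) + cnj w * (A $ j $ i + A $ j $ j * w)"
    by (simp only: inner outer)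
  finally show ?thesis
    by (simp add: distrib_left mult.assoc)
qed

lemma mult_cnj_sgn: "z * cnj (sgn z) = of_real (cmod z)"
proof (cases "z = 0")
  case False
  have "z * cnj (sgn z) = z * cnj z / of_real (cmod z)"
    by (simp add: sgn_div_norm scaleR_conv_of_real divide_inverse mult.commute)
  also have "\<dots> = of_real (cmod z)"
    using False by (simp flip: complex_norm_square add: power2_eq_square)
  finally show ?thesis .
qed simp

(* Test vector e_i + w e_j, with w chosen so that both cross terms equal -|A_ij|. *)
lemma psd_offdiag_norm_le:
  fixes A :: "complex^'n::finite^'n"
  assumes "psd A" "i \<noteq> j"
  shows "2 * cmod (A $ i $ j) \<le> Re (A $ i $ i) + Re (A $ j $ j)"
proof -
  define a where "a = A $ i $ j"
  define w where "w = - cnj (sgn a)"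
  define v :: "complex^'n" where "v = (\<chi> k. (if k = i then 1 else 0) + (if k = j then w else 0))"
  have herm: "A $ j $ i = cnj a"
    using assms(1) unfolding psd_def hermitian_def a_def by blast
  have aw: "a * w = - of_real (cmod a)" and aw': "cnj w * cnj a = - of_real (cmod a)"
    unfolding w_def using mult_cnj_sgn[of a] complex_cnj_mult[of a "cnj (sgn a)"]
    by (simp_all add: mult.commute)
  have ww: "cnj w * w = of_real ((cmod w)\<^sup>2)"
    by (simp only: complex_norm_square mult.commute)
  have "quad_form A v = A $ i $ i + of_real ((cmod w)\<^sup>2) * A $ j $ j - 2 * of_real (cmod a)"
    unfolding v_def quad_form_two_unit_vectors[OF assms(2)] herm a_def[symmetric] aw aw' ww
    by simp
  then have "Re (quad_form A v) = Re (A $ i $ i) + (cmod w)\<^sup>2 * Re (A $ j $ j) - 2 * cmod a"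
    by simp
  moreover have "0 \<le> Re (quad_form A v)"
    using assms(1) unfolding psd_iff_quad_form by blast
  moreover have "(cmod w)\<^sup>2 * Re (A $ j $ j) \<le> Re (A $ j $ j)"
    using psd_diag_nonneg[OF assms(1), of j]
    by (intro mult_left_le_one_le) (auto simp: w_def norm_sgn power_le_one)
  ultimately show ?thesis unfolding a_def by linarith
qed

lemma psd_entry_norm_le_trace:
  fixes A :: "complex^'n::finite^'n"
  assumes "psd A"
  shows "cmod (A $ a $ b) \<le> Re (trace A)"
proof -
  have diag: "0 \<le> Re (A $ k $ k)" for k
    using assms by (rule psd_diag_nonneg)
  have trace: "Re (trace A) = (\<Sum>k\<in>UNIV. Re (A $ k $ k))"
    by (simp add: trace_def)
  show ?thesis
  proof (cases "a = b")
    case True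
    have "A $ a $ a = cnj (A $ a $ a)"
      using assms unfolding psd_def hermitian_def by blast
    then have "cmod (A $ a $ a) = Re (A $ a $ a)"
      using diag[of a] by (metis Reals_cnj_iff cmod_eq_Re complex_is_Real_iff abs_of_nonneg)
    also have "\<dots> \<le> Re (trace A)"
      unfolding trace using diag by (intro member_le_sum) auto
    finally show ?thesis using True by simp
  next
    case False
    have "2 * cmod (A $ a $ b) \<le> Re (A $ a $ a) + Re (A $ b $ b)"
      using assms False by (rule psd_offdiag_norm_le)
    also have "\<dots> = (\<Sum>k\<in>{a, b}. Re (A $ k $ k))"
      using False by simp
    also have "\<dots> \<le> Re (trace A)"
      unfolding trace using diag by (intro sum_mono2) auto
    moreover have "0 \<le> Re (trace A)"
      unfolding trace using diag by (rule sum_nonneg)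
    ultimately show ?thesis by linarith
  qed
qed

lemma psd_quad_form_le:
  fixes A :: "complex^'n::finite^'n"
  assumes "psd A"
  shows "Re (quad_form A v) \<le> real CARD('n) * Re (trace A) * (\<Sum>i\<in>UNIV. (cmod (v $ i))\<^sup>2)"
proof -
  define x where "x i = cmod (v $ i)" for i
  have entry: "cmod (A $ a $ b) \<le> Re (trace A)" for a b
    using assms by (rule psd_entry_norm_le_trace)
  then have "0 \<le> Re (trace A)"
    using norm_ge_zero order_trans by blast
  have "Re (quad_form A v) \<le> cmod (quad_form A v)"
    by (rule complex_Re_le_cmod)
  also have "\<dots> \<le> (\<Sum>a\<in>UNIV. \<Sum>b\<in>UNIV. cmod (cnj (v $ a) * A $ a $ b * v $ b))"
    unfolding quad_form_def by (rule order_trans[OF norm_sum sum_mono[OF norm_sum]])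
  also have "\<dots> \<le> (\<Sum>a\<in>UNIV. \<Sum>b\<in>UNIV. Re (trace A) * (x a * x b))"
  proof (intro sum_mono)
    fix a b
    have "cmod (cnj (v $ a) * A $ a $ b * v $ b) = cmod (A $ a $ b) * (x a * x b)"
      unfolding x_def by (simp add: norm_mult)
    also have "\<dots> \<le> Re (trace A) * (x a * x b)"
      unfolding x_def by (intro mult_right_mono entry) simp
    finally show "cmod (cnj (v $ a) * A $ a $ b * v $ b) \<le> Re (trace A) * (x a * x b)" .
  qed
  also have "\<dots> = Re (trace A) * (\<Sum>i\<in>UNIV. x i)\<^sup>2"
    unfolding power2_eq_square by (subst sum_product) (simp only: sum_distrib_left)
  also have "\<dots> \<le> Re (trace A) * ((\<Sum>i\<in>UNIV. (x i)\<^sup>2) * CARD('n))"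
    using \<open>0 \<le> Re (trace A)\<close> by (intro mult_left_mono sum_squared_le_sum_of_squares)
  finally show ?thesis
    unfolding x_def by (simp add: mult_ac)
qed

lemma loewner_le_scaleR_mat1:
  fixes A :: "complex^'n::finite^'n"
    and c x :: real
  assumes "psd A" "0 \<le> c" "c * real CARD('n) * Re (trace A) \<le> x"
  shows "loewner_le (c *\<^sub>R A) (x *\<^sub>R mat 1)"
  unfolding loewner_le_def psd_iff_quad_form
proof (intro conjI allI)
  show "hermitian (x *\<^sub>R mat 1 - c *\<^sub>R A)"
    using assms(1) unfolding psd_def by (intro hermitian_diff hermitian_scaleR hermitian_mat1) simp
  fix v :: "complex^'n"
  define S where "S = (\<Sum>i\<in>UNIV. (cmod (v $ i))\<^sup>2)"
  have "0 \<le> S"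
    unfolding S_def by (simp add: sum_nonneg)
  have "c * Re (quad_form A v) \<le> c * (real CARD('n) * Re (trace A) * S)"
    unfolding S_def using assms(1,2) by (intro mult_left_mono psd_quad_form_le)
  also have "\<dots> \<le> x * S"
    using mult_right_mono[OF assms(3) \<open>0 \<le> S\<close>] by (simp add: mult_ac)
  finally show "0 \<le> Re (quad_form (x *\<^sub>R mat 1 - c *\<^sub>R A) v)"
    unfolding quad_form_diff quad_form_scaleR quad_form_mat1 S_def by simp
qed

lemma loewner_le_scaleR_mat1_of_diag_le:
  fixes A :: "complex^'n::finite^'n"
    and d x :: real
  assumes "psd A" "0 \<le> d" "\<And>k. d * Re (A $ k $ k) \<le> x"
  shows "loewner_le ((d / (real CARD('n))\<^sup>2) *\<^sub>R A) (x *\<^sub>R mat 1)"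
proof (rule loewner_le_scaleR_mat1[OF assms(1)])
  show "0 \<le> d / (real CARD('n))\<^sup>2"
    using assms(2) by simp
  have "d * Re (trace A) = (\<Sum>k\<in>UNIV. d * Re (A $ k $ k))"
    by (simp add: trace_def sum_distrib_left)
  also have "\<dots> \<le> real CARD('n) * x"
    using sum_mono[of UNIV "\<lambda>k. d * Re (A $ k $ k)" "\<lambda>_. x"] assms(3) by simp
  finally show "d / (real CARD('n))\<^sup>2 * real CARD('n) * Re (trace A) \<le> x"
    by (simp add: power2_eq_square field_simps)
qed

section \<open>Lower-computable semi-POVMs\<close>

lemma rat_of_code_0: "rat_of_code 0 = 0"
  by (simp add: rat_of_code_def prod_decode_def prod_decode_aux.simps int_decode_def sum_decode_def
      Zero_rat_def)

lemma gauss_of_code_0: "gauss_of_code 0 = 0"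
  by (simp add: gauss_of_code_def prod_decode_def prod_decode_aux.simps rat_of_code_0 complex_eq_iff)

lemma gauss_of_code_real: "gauss_of_code (prod_encode (c, 0)) = of_real (real_of_rat (rat_of_code c))"
  by (simp add: gauss_of_code_def rat_of_code_0 complex_eq_iff)

lemma Re_gauss_of_code: "Re (gauss_of_code c) = real_of_rat (rat_of_code (fst (prod_decode c)))"
  by (simp add: gauss_of_code_def case_prod_beta)

lemma computable_mat_fun_scaleR_mat1:
  assumes "computable_rat_fun g"
  shows "computable_mat_fun (\<lambda>n s. real_of_rat (g n s) *\<^sub>R (mat 1 :: complex^'n::finite^'n))"
proof -
  obtain h where h: "total_recursive h" "\<And>n s. rat_of_code (h (prod_encode (n, code_str s))) = g n s"
    using assms unfolding computable_rat_fun_def by blast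
  obtain ix :: "'n \<Rightarrow> nat" where ix: "bij_betw ix UNIV {..<CARD('n)}"
    using ex_bij_betw_finite_nat[of "UNIV :: 'n set"] by (auto simp: atLeast0LessThan)
  define H where "H z = (let ij = prod_decode (snd (prod_decode z)) in
    if fst ij = snd ij then prod_encode (h (fst (prod_decode z)), 0) else 0)" for z
  have "recursive_fn 1 (\<lambda>xs. H (xs ! 0))"
    unfolding H_def Let_def
    by (intro recursive_fn_intros recursive_fn_total_recursive[OF h(1)]) simp_all
  then have "total_recursive H"
    by (simp add: total_recursive_iff_recursive_fn)
  moreover have "gauss_of_code (H (prod_encode (prod_encode (n, code_str s), prod_encode (ix i, ix j))))
      = (real_of_rat (g n s) *\<^sub>R (mat 1 :: complex^'n^'n)) $ i $ j" for n s i j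
    unfolding scaleR_matrix_nth mat1_nth using bij_betw_imp_inj_on[OF ix]
    by (auto simp: H_def gauss_of_code_real gauss_of_code_0 h(2) dest: injD)
  ultimately show ?thesis
    unfolding computable_mat_fun_def using ix by blast
qed

lemma semi_POVM_scaleR_mat1:
  assumes "\<And>s. 0 \<le> m s" "m summable_on UNIV" "infsum m UNIV \<le> 1"
  shows "semi_POVM (\<lambda>s. m s *\<^sub>R (mat 1 :: complex^'n::finite^'n))"
  unfolding semi_POVM_def loewner_le_def
proof (intro conjI allI)
  show "hermitian (m s *\<^sub>R (mat 1 :: complex^'n^'n))" for s
    by (intro hermitian_scaleR hermitian_mat1)
  show "psd (m s *\<^sub>R (mat 1 :: complex^'n^'n) - 0)" for s
    using psd_scaleR_mat1[OF assms(1)] by simp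
  show "(\<lambda>s. m s *\<^sub>R (mat 1 :: complex^'n^'n)) summable_on UNIV"
    using assms(2) by (rule summable_on_scaleR_left)
  have "mat 1 - infsum (\<lambda>s. m s *\<^sub>R (mat 1 :: complex^'n^'n)) UNIV = mat 1 - infsum m UNIV *\<^sub>R mat 1"
    using assms(2) by (simp add: infsum_scaleR_left)
  also have "\<dots> = (1 - infsum m UNIV) *\<^sub>R mat 1"
    by (simp add: scaleR_diff_left)
  finally show "psd (mat 1 - infsum (\<lambda>s. m s *\<^sub>R (mat 1 :: complex^'n^'n)) UNIV)"
    using psd_scaleR_mat1[of "1 - infsum m UNIV"] assms(3) by simp
qed

lemma lower_computable_semi_POVM_scaleR_mat1:
  assumes "lower_computable_semimeasure m"
  shows "lower_computable_semi_POVM (\<lambda>s. m s *\<^sub>R (mat 1 :: complex^'n::finite^'n))"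
proof -
  obtain g where g: "computable_rat_fun g" "\<And>s. (\<lambda>n. real_of_rat (g n s)) \<longlonglongrightarrow> m s"
    "\<And>n s. g n s \<le> g (Suc n) s"
    using assms unfolding lower_computable_semimeasure_def by blast
  have le: "real_of_rat (g n s) \<le> m s" for n s
    by (rule incseq_le[OF incseq_SucI g(2)]) (simp add: g(3) of_rat_less_eq)
  have "loewner_le (real_of_rat (g n s) *\<^sub>R (mat 1 :: complex^'n^'n)) (m s *\<^sub>R mat 1)" for n s
    unfolding loewner_le_def scaleR_diff_left[symmetric] using le[of n s] by (simp add: psd_scaleR_mat1)
  moreover have "real_of_rat (g n s) *\<^sub>R (mat 1 :: complex^'n^'n) \<in> Her_Q" for n s
    unfolding Her_Q_def mem_Collect_eq scaleR_matrix_nth mat1_nth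
    using hermitian_scaleR[OF hermitian_mat1] by simp
  moreover have "(\<lambda>n. real_of_rat (g n s) *\<^sub>R (mat 1 :: complex^'n^'n)) \<longlonglongrightarrow> m s *\<^sub>R mat 1" for s
    by (intro tendsto_scaleR g(2) tendsto_const)
  moreover have "semi_POVM (\<lambda>s. m s *\<^sub>R (mat 1 :: complex^'n^'n))"
    using assms unfolding lower_computable_semimeasure_def by (intro semi_POVM_scaleR_mat1) auto
  ultimately show ?thesis
    unfolding lower_computable_semi_POVM_def
    using computable_mat_fun_scaleR_mat1[OF g(1)]
    by (intro conjI exI[of _ "\<lambda>n s. real_of_rat (g n s) *\<^sub>R mat 1"]) simp_all
qed

lemma computable_rat_fun_Re_entry:
  fixes f :: "nat \<Rightarrow> bool list \<Rightarrow> complex^'n::finite^'n"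
  assumes "computable_mat_fun f"
  shows "\<exists>g. computable_rat_fun g \<and> (\<forall>n s. real_of_rat (g n s) = Re (f n s $ i $ j))"
proof -
  obtain ix :: "'n \<Rightarrow> nat" and h where h: "total_recursive h"
    "\<And>n s i j. gauss_of_code (h (prod_encode (prod_encode (n, code_str s), prod_encode (ix i, ix j))))
      = f n s $ i $ j"
    using assms unfolding computable_mat_fun_def by blast
  define H where "H z = fst (prod_decode (h (prod_encode (z, prod_encode (ix i, ix j)))))" for z
  have "recursive_fn 1 (\<lambda>xs. H (xs ! 0))"
    unfolding H_def by (intro recursive_fn_intros recursive_fn_total_recursive[OF h(1)]) simp
  then have "computable_rat_fun (\<lambda>n s. rat_of_code (H (prod_encode (n, code_str s))))"
    unfolding computable_rat_fun_def total_recursive_iff_recursive_fn by blast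
  moreover have "real_of_rat (rat_of_code (H (prod_encode (n, code_str s)))) = Re (f n s $ i $ j)" for n s
    unfolding H_def by (simp flip: h(2) add: Re_gauss_of_code)
  ultimately show ?thesis by blast
qed

lemma bounded_linear_Re_diag: "bounded_linear (\<lambda>A :: complex^'n::finite^'n. Re (A $ i $ i))"
  by (intro bounded_linear_compose[OF bounded_linear_Re] bounded_linear_compose[OF bounded_linear_vec_nth]
      bounded_linear_vec_nth)

lemma lower_computable_semimeasure_diag:
  fixes R :: "bool list \<Rightarrow> complex^'n::finite^'n"
  assumes "lower_computable_semi_POVM R"
  shows "lower_computable_semimeasure (\<lambda>s. Re (R s $ i $ i))"
proof -
  have psd: "\<And>s. psd (R s)" and sum: "R summable_on UNIV" and "psd (mat 1 - infsum R UNIV)"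
    using assms unfolding lower_computable_semi_POVM_def semi_POVM_def loewner_le_def by auto
  obtain f where f: "computable_mat_fun f" "\<And>s. (\<lambda>n. f n s) \<longlonglongrightarrow> R s"
    "\<And>n s. loewner_le (f n s) (R s)"
    using assms unfolding lower_computable_semi_POVM_def by blast
  obtain g where g: "computable_rat_fun g" "\<And>n s. real_of_rat (g n s) = Re (f n s $ i $ i)"
    using computable_rat_fun_Re_entry[OF f(1)] by blast
  have has_sum: "((\<lambda>s. Re (R s $ i $ i)) has_sum Re (infsum R UNIV $ i $ i)) UNIV"
    using has_sum_bounded_linear[OF bounded_linear_Re_diag has_sum_infsum[OF sum]] .
  show ?thesis
  proof (rule lower_computable_semimeasure_of_approx[OF _ _ _ g(1)])
    show "0 \<le> Re (R s $ i $ i)" for s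
      using psd by (rule psd_diag_nonneg)
    show "(\<lambda>s. Re (R s $ i $ i)) summable_on UNIV"
      using has_sum by (rule has_sum_imp_summable)
    have "0 \<le> Re ((mat 1 - infsum R UNIV) $ i $ i)"
      using \<open>psd (mat 1 - infsum R UNIV)\<close> by (rule psd_diag_nonneg)
    then show "infsum (\<lambda>s. Re (R s $ i $ i)) UNIV \<le> 1"
      using infsumI[OF has_sum] by (simp add: mat1_nth)
    show "(\<lambda>n. real_of_rat (g n s)) \<longlonglongrightarrow> Re (R s $ i $ i)" for s
      unfolding g(2) by (intro tendsto_intros f(2))
    show "real_of_rat (g n s) \<le> Re (R s $ i $ i)" for n s
      using psd_diag_nonneg[OF f(3)[of n s, unfolded loewner_le_def], of i] g(2) by simp
  qed
qed

lemma ex_uniform_pos_constant: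
  fixes f :: "'i::finite \<Rightarrow> 'a \<Rightarrow> real"
  assumes "\<And>i. \<exists>c>0. \<forall>s. c * f i s \<le> g s" and "\<And>i s. 0 \<le> f i s"
  shows "\<exists>c>0. \<forall>i s. c * f i s \<le> g s"
proof -
  obtain C where C: "\<And>i. C i > 0" "\<And>i s. C i * f i s \<le> g s"
    using assms(1) by metis
  have "Min (range C) > 0"
    using C(1) by (subst Min_gr_iff) auto
  moreover have "Min (range C) * f i s \<le> g s" for i s
  proof -
    have "Min (range C) \<le> C i"
      by simp
    then have "Min (range C) * f i s \<le> C i * f i s"
      using assms(2) by (rule mult_right_mono)
    then show ?thesis
      using C(2) by (rule order_trans)
  qed
  ultimately show ?thesis by blast
qed

theorem mainTheorem3:
  fixes m :: "bool list \<Rightarrow> real"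
  assumes "universal_probability m"
  shows "universal_semi_POVM (\<lambda>s. m s *\<^sub>R (mat 1 :: complex^'n::finite^'n))"
proof -
  have m: "lower_computable_semimeasure m"
    and dominates: "\<And>r. lower_computable_semimeasure r \<Longrightarrow> \<exists>c>0. \<forall>s. c * r s \<le> m s"
    using assms unfolding universal_probability_def by auto
  have "\<exists>c>0. \<forall>s. loewner_le (c *\<^sub>R R s) (m s *\<^sub>R mat 1)"
    if R: "lower_computable_semi_POVM (R :: bool list \<Rightarrow> complex^'n^'n)" for R
  proof -
    have psd: "psd (R s)" for s
      using R unfolding lower_computable_semi_POVM_def semi_POVM_def loewner_le_def by auto
    obtain d where "d > 0" and d: "\<And>k s. d * Re (R s $ k $ k) \<le> m s"
      using ex_uniform_pos_constant[of "\<lambda>k s. Re (R s $ k $ k)" m]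
        dominates[OF lower_computable_semimeasure_diag[OF R]] psd_diag_nonneg[OF psd] by blast
    have "loewner_le ((d / (real CARD('n))\<^sup>2) *\<^sub>R R s) (m s *\<^sub>R mat 1)" for s
      using psd \<open>d > 0\<close> d by (intro loewner_le_scaleR_mat1_of_diag_le) auto
    then show ?thesis
      using \<open>d > 0\<close> by (intro exI[of _ "d / (real CARD('n))\<^sup>2"]) simp
  qed
  then show ?thesis
    unfolding universal_semi_POVM_def using lower_computable_semi_POVM_scaleR_mat1[OF m] by blast
qed

end
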